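(* Let $G$ and $H$ be chain graphs over the same node set $V$ such that the undirected edges of $H$ are a subset of the undirected edges of $G$ and the directed edges of $H$ are a subset of the directed edges of $G$. Then $\mathcal{N}(H)\subseteq\mathcal{N}(G)$.
   Context: A chain graph (CG) over $V=\{1,\dots,N\}$ is a graph with (at most one) undirected or directed edge between any two nodes and no directed pseudocycle (a closed route following edges $v_i - v_{i+1}$ or $v_i\to v_{i+1}$ with at least one directed edge). Its connectivity components $B_1,\dots,B_n$ are the maximal sets connected by undirected routes, ordered so directed edges go from lower to higher index; $Pa(B_i)$ is the set of parents of nodes of $B_i$. The moral graph $K^m$ of a CG $K$ joins two nodes iff they are adjacent in $K$ or both are parents of a common connectivity component of $K$. For a CG $G$, $\mathcal{N}(G)$ is the set of regular (positive definite covariance) Gaussian distributions $p$ on $\mathbb{R}^N$ with $p(x)=\prod_i p(x_{B_i}\mid x_{Pa(B_i)})$ and each marginal $p(x_{B_i\cup Pa(B_i)})$ equal to a product of non-negative functions over the complete sets of $(G_{B_i\cup Pa(B_i)})^m$, where $G_I$ is the induced subgraph on $I$. *)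

theory Defs
  imports "HOL-Analysis.Analysis"
begin

record 'n mgraph =
  nodes :: "'n set"
  und   :: "('n \<times> 'n) set"
  dir   :: "('n \<times> 'n) set"

definition wf_graph :: "'n mgraph \<Rightarrow> bool" where
  "wf_graph K \<longleftrightarrow>
     und K \<subseteq> nodes K \<times> nodes K \<and> dir K \<subseteq> nodes K \<times> nodes K \<and>
     sym (und K) \<and> (\<forall>a. (a,a) \<notin> und K \<and> (a,a) \<notin> dir K) \<and>
     (\<forall>a b. (a,b) \<in> dir K \<longrightarrow> (b,a) \<notin> dir K \<and> (a,b) \<notin> und K)"

definition has_dir_pseudocycle :: "'n mgraph \<Rightarrow> bool" where
  "has_dir_pseudocycle K \<longleftrightarrow> (\<exists>a b. (a,b) \<in> dir K \<and> (b,a) \<in> (und K \<union> dir K)\<^sup>*)"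

definition chain_graph :: "'n mgraph \<Rightarrow> bool" where
  "chain_graph K \<longleftrightarrow> wf_graph K \<and> \<not> has_dir_pseudocycle K"

definition comps :: "'n mgraph \<Rightarrow> 'n set set" where
  "comps K = {{w. (v,w) \<in> (und K)\<^sup>*} | v. v \<in> nodes K}"

definition parents :: "'n mgraph \<Rightarrow> 'n set \<Rightarrow> 'n set" where
  "parents K B = {a. \<exists>b\<in>B. (a,b) \<in> dir K}"

definition induced :: "'n mgraph \<Rightarrow> 'n set \<Rightarrow> 'n mgraph" where
  "induced K I = \<lparr>nodes = nodes K \<inter> I, und = und K \<inter> (I \<times> I), dir = dir K \<inter> (I \<times> I)\<rparr>"

definition moral_edges :: "'n mgraph \<Rightarrow> ('n \<times> 'n) set" where
  "moral_edges K = {(a,b). a \<noteq> b \<and>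
     ((a,b) \<in> und K \<or> (a,b) \<in> dir K \<or> (b,a) \<in> dir K \<or>
      (\<exists>B\<in>comps K. a \<in> parents K B \<and> b \<in> parents K B))}"

definition complete_set :: "'n set \<Rightarrow> ('n \<times> 'n) set \<Rightarrow> 'n set \<Rightarrow> bool" where
  "complete_set W E C \<longleftrightarrow> C \<subseteq> W \<and> (\<forall>a\<in>C. \<forall>b\<in>C. a \<noteq> b \<longrightarrow> (a,b) \<in> E)"

text \<open>Points are functions \<open>'n \<Rightarrow> real\<close>; densities are w.r.t. Lebesgue measure.\<close>

definition vec_of :: "('n::finite \<Rightarrow> real) \<Rightarrow> real ^ 'n" where
  "vec_of x = (\<chi> i. x i)"

definition pos_def :: "real ^ 'n ^ 'n \<Rightarrow> bool" where
  "pos_def S \<longleftrightarrow> transpose S = S \<and> (\<forall>v. v \<noteq> 0 \<longrightarrow> v \<bullet> (S *v v) > 0)"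

definition gauss_density :: "real ^ 'n \<Rightarrow> real ^ 'n ^ 'n \<Rightarrow> ('n::finite \<Rightarrow> real) \<Rightarrow> real" where
  "gauss_density \<mu> S x =
     (2 * pi) powr (- real CARD('n) / 2) / sqrt (det S) *
     exp (- (1/2) * ((vec_of x - \<mu>) \<bullet> (matrix_inv S *v (vec_of x - \<mu>))))"

definition regular_gaussian :: "(('n::finite \<Rightarrow> real) \<Rightarrow> real) \<Rightarrow> bool" where
  "regular_gaussian p \<longleftrightarrow> (\<exists>\<mu> S. pos_def S \<and> p = gauss_density \<mu> S)"

text \<open>Marginal density of \<open>x_I\<close> (as a function of \<open>x\<close>, depending only on \<open>x_I\<close>).\<close>
definition marg :: "(('n::finite \<Rightarrow> real) \<Rightarrow> real) \<Rightarrow> 'n set \<Rightarrow> ('n \<Rightarrow> real) \<Rightarrow> real" where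
  "marg p I x = (LINT y | PiM (UNIV - I) (\<lambda>_. lborel). p (merge I (UNIV - I) (x, y)))"

definition cond_density :: "(('n::finite \<Rightarrow> real) \<Rightarrow> real) \<Rightarrow> 'n set \<Rightarrow> 'n set \<Rightarrow> ('n \<Rightarrow> real) \<Rightarrow> real" where
  "cond_density p B A x = marg p (B \<union> A) x / marg p A x"

definition depends_only_on :: "'n set \<Rightarrow> (('n \<Rightarrow> real) \<Rightarrow> real) \<Rightarrow> bool" where
  "depends_only_on C f \<longleftrightarrow> (\<forall>x y. (\<forall>i\<in>C. x i = y i) \<longrightarrow> f x = f y)"

definition factorizes_over :: "'n set \<Rightarrow> ('n \<times> 'n) set \<Rightarrow> (('n \<Rightarrow> real) \<Rightarrow> real) \<Rightarrow> bool" where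
  "factorizes_over W E f \<longleftrightarrow>
     (\<exists>\<psi>. (\<forall>C. complete_set W E C \<longrightarrow> depends_only_on C (\<psi> C) \<and> (\<forall>x. \<psi> C x \<ge> 0)) \<and>
          (\<forall>x. f x = (\<Prod>C\<in>{C. complete_set W E C}. \<psi> C x)))"

definition gauss_CG_model :: "'n::finite mgraph \<Rightarrow> (('n \<Rightarrow> real) \<Rightarrow> real) set" where
  "gauss_CG_model G = {p. regular_gaussian p \<and>
     (\<forall>x. p x = (\<Prod>B\<in>comps G. cond_density p B (parents G B) x)) \<and>
     (\<forall>B\<in>comps G. factorizes_over (nodes (induced G (B \<union> parents G B)))
                    (moral_edges (induced G (B \<union> parents G B)))
                    (marg p (B \<union> parents G B)))}"

end

theory Submission
  imports Defs "HOL-Probability.Distributions"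
begin

text \<open>
  For a component \<open>K\<close> of \<open>H\<close> let \<open>c K\<close> be the conditional density of \<open>x\<close> on \<open>K\<close>
  given \<open>x\<close> on \<open>pa(K)\<close>.
  (1) For every ancestral set \<open>S\<close> of \<open>H\<close>, the marginal of \<open>p\<close> on \<open>S\<close> is the product of the
      \<open>c K\<close> with \<open>K \<subseteq> S\<close>: add one component at a time and integrate it out.
  (2) For a component \<open>B\<close> of \<open>G\<close>, apply (1) to the non-descendants \<open>N\<close> of \<open>B\<close> and to
      \<open>N \<union> B\<close> (both ancestral in \<open>G\<close>, hence in \<open>H\<close>) and integrate out \<open>N - pa(B)\<close>: the
      marginal on \<open>B \<union> pa(B)\<close> is the marginal on \<open>pa(B)\<close> times the \<open>c K\<close> with \<open>K \<subseteq> B\<close>.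
  (3) Hence \<open>p\<close> is the product of its conditional densities along \<open>G\<close>, and every family
      marginal of \<open>G\<close> factorizes over the moral family graph of \<open>G\<close>: \<open>pa(B)\<close> and each
      \<open>pa\<^sub>H(K)\<close> are complete there, and the complete sets of the moral family graphs of \<open>H\<close>
      remain complete.  The Gaussian form
  yields positivity of \<open>p\<close> only up to sign; the sign is fixed by the non-negativity of the
  factorization potentials.
\<close>

section \<open>Connectivity components and ancestral sets\<close>

definition ccomp :: "'n mgraph \<Rightarrow> 'n \<Rightarrow> 'n set" where
  "ccomp K v = {w. (v,w) \<in> (und K)\<^sup>*}"

definition ancestral :: "'n mgraph \<Rightarrow> 'n set \<Rightarrow> bool" where
  "ancestral K S \<longleftrightarrow> (\<forall>v\<in>S. \<forall>u. (u,v) \<in> und K \<union> dir K \<longrightarrow> u \<in> S)"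

lemma comps_eq_range_ccomp: "nodes K = UNIV \<Longrightarrow> comps K = range (ccomp K)"
  by (auto simp: comps_def ccomp_def)

lemma ccomp_self: "v \<in> ccomp K v"
  by (simp add: ccomp_def)

lemma comps_nonempty: "nodes K = UNIV \<Longrightarrow> B \<in> comps K \<Longrightarrow> B \<noteq> {}"
  using ccomp_self by (fastforce simp: comps_eq_range_ccomp)

lemma ccomp_mono: "und H \<subseteq> und G \<Longrightarrow> ccomp H v \<subseteq> ccomp G v"
  unfolding ccomp_def using rtrancl_mono by blast

lemma und_route: "(a,b) \<in> (und K)\<^sup>* \<Longrightarrow> (a,b) \<in> (und K \<union> dir K)\<^sup>*"
  by (rule rtrancl_mono[THEN subsetD, rotated]) auto

lemma no_pseudocycle: "chain_graph K \<Longrightarrow> (a,b) \<in> dir K \<Longrightarrow> (b,a) \<in> (und K \<union> dir K)\<^sup>* \<Longrightarrow> False"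
  by (auto simp: chain_graph_def has_dir_pseudocycle_def)

lemma und_sym: "chain_graph K \<Longrightarrow> (a,b) \<in> und K \<Longrightarrow> (b,a) \<in> und K"
  by (auto simp: chain_graph_def wf_graph_def dest: symD)

lemma und_rtrancl_sym:
  assumes "chain_graph K" and "(a,b) \<in> (und K)\<^sup>*"
  shows "(b,a) \<in> (und K)\<^sup>*"
proof -
  have "sym ((und K)\<^sup>*)"
    using assms(1) sym_rtrancl by (auto simp: chain_graph_def wf_graph_def)
  then show ?thesis using assms(2) by (rule symD)
qed

lemma ccomp_connected:
  assumes cg: "chain_graph K" and "a \<in> ccomp K v" and "b \<in> ccomp K v"
  shows "(a,b) \<in> (und K)\<^sup>*"
proof -
  have "(a,v) \<in> (und K)\<^sup>*" using und_rtrancl_sym[OF cg] assms(2) by (simp add: ccomp_def)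
  moreover have "(v,b) \<in> (und K)\<^sup>*" using assms(3) by (simp add: ccomp_def)
  ultimately show ?thesis by (rule rtrancl_trans)
qed

lemma ccomp_und_closed: "chain_graph K \<Longrightarrow> b \<in> ccomp K v \<Longrightarrow> (a,b) \<in> und K \<Longrightarrow> a \<in> ccomp K v"
  unfolding ccomp_def by (auto intro: rtrancl_into_rtrancl und_sym)

lemma ccomp_disjoint:
  assumes cg: "chain_graph K" and "ccomp K v \<inter> ccomp K w \<noteq> {}"
  shows "ccomp K v = ccomp K w"
proof -
  obtain u where u: "u \<in> ccomp K v" "u \<in> ccomp K w" using assms(2) by blast
  have "(v,u) \<in> (und K)\<^sup>*" "(u,w) \<in> (und K)\<^sup>*" "(w,u) \<in> (und K)\<^sup>*" "(u,v) \<in> (und K)\<^sup>*"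
    using u ccomp_connected[OF cg u(1) ccomp_self] ccomp_connected[OF cg u(2) ccomp_self]
    by (simp_all add: ccomp_def)
  then have "(v,w) \<in> (und K)\<^sup>*" "(w,v) \<in> (und K)\<^sup>*" by (blast intro: rtrancl_trans)+
  then show ?thesis unfolding ccomp_def by (auto intro: rtrancl_trans)
qed

lemma comps_disjoint:
  assumes "chain_graph K" "nodes K = UNIV" "B \<in> comps K" "B' \<in> comps K" "B \<noteq> B'"
  shows "B \<inter> B' = {}"
proof -
  from assms(3,4) obtain v v' where "B = ccomp K v" "B' = ccomp K v'"
    unfolding comps_eq_range_ccomp[OF assms(2)] by blast
  then show ?thesis using ccomp_disjoint[OF assms(1), of v v'] assms(5) by blast
qed

lemma ccomp_path:
  assumes cg: "chain_graph K" and a: "a \<in> ccomp K v" and b: "b \<in> ccomp K v"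
  shows "(a,b) \<in> (und K \<inter> ccomp K v \<times> ccomp K v)\<^sup>*"
  using ccomp_connected[OF cg a b] b
proof (induction rule: rtrancl_induct)
  case base
  then show ?case by simp
next
  case (step y z)
  have "y \<in> ccomp K v" using step.prems step.hyps(2) ccomp_und_closed[OF cg] und_sym[OF cg] by blast
  then show ?case using step by (auto intro: rtrancl_into_rtrancl)
qed

text \<open>Inside the family of a component, directed edges can only start at parents of the
  component (a directed edge starting inside it would close a pseudocycle).\<close>
lemma parent_of_ccomp_directed:
  assumes cg: "chain_graph K" and e: "(a,b) \<in> dir K"
    and a: "a \<in> ccomp K v \<union> parents K (ccomp K v)" and b: "b \<in> ccomp K v \<union> parents K (ccomp K v)"
  shows "a \<in> parents K (ccomp K v)"
proof (rule ccontr)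
  assume "a \<notin> parents K (ccomp K v)"
  then have aC: "a \<in> ccomp K v" using a by blast
  have "(b,a) \<in> (und K \<union> dir K)\<^sup>*"
  proof (cases "b \<in> ccomp K v")
    case True
    show ?thesis by (rule und_route[OF ccomp_connected[OF cg True aC]])
  next
    case False
    then obtain k where "k \<in> ccomp K v" "(b,k) \<in> dir K" using b unfolding parents_def by blast
    then show ?thesis using und_route[OF ccomp_connected[OF cg _ aC]]
      by (blast intro: converse_rtrancl_into_rtrancl)
  qed
  then show False using no_pseudocycle[OF cg e] by blast
qed

text \<open>Outside any proper node set there is a component all of whose parents lie in the set:
  take a node outside with the fewest ancestors.\<close>
lemma minimal_component_outside:
  fixes K :: "'n::finite mgraph"
  assumes cg: "chain_graph K" and "S \<noteq> UNIV"
  shows "\<exists>v. v \<notin> S \<and> parents K (ccomp K v) \<subseteq> S"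
proof -
  define anc where "anc w = {u. (u,w) \<in> (und K \<union> dir K)\<^sup>*}" for w
  obtain v where v: "v \<notin> S" and vmin: "\<And>w. w \<notin> S \<Longrightarrow> card (anc v) \<le> card (anc w)"
    using assms(2) ex_has_least_nat[of "\<lambda>w. w \<notin> S" _ "\<lambda>w. card (anc w)"] by blast
  have "u \<in> S" if pa: "u \<in> parents K (ccomp K v)" for u
  proof (rule ccontr)
    assume u: "u \<notin> S"
    obtain k where k: "k \<in> ccomp K v" "(u,k) \<in> dir K"
      using pa unfolding parents_def by blast
    have kv: "(k,v) \<in> (und K \<union> dir K)\<^sup>*"
      by (rule und_route[OF ccomp_connected[OF cg k(1) ccomp_self]])
    have uv: "(u,v) \<in> (und K \<union> dir K)\<^sup>*"
      using k(2) kv by (blast intro: converse_rtrancl_into_rtrancl)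
    have "anc u \<subseteq> anc v"
      unfolding anc_def using uv by (auto intro: rtrancl_trans)
    moreover have "v \<notin> anc u"
    proof
      assume "v \<in> anc u"
      then have "(k,u) \<in> (und K \<union> dir K)\<^sup>*"
        using kv unfolding anc_def by (auto intro: rtrancl_trans)
      then show False by (rule no_pseudocycle[OF cg k(2)])
    qed
    moreover have "v \<in> anc v" by (simp add: anc_def)
    ultimately have "card (anc u) < card (anc v)" by (intro psubset_card_mono) auto
    with vmin[OF u] show False by simp
  qed
  with v show ?thesis by blast
qed

lemma ancestral_mono:
  "und H \<subseteq> und G \<Longrightarrow> dir H \<subseteq> dir G \<Longrightarrow> ancestral G S \<Longrightarrow> ancestral H S"
  unfolding ancestral_def by blast

lemma ancestral_ccomp_disjoint:
  assumes S: "ancestral K S" and v: "v \<notin> S"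
  shows "S \<inter> ccomp K v = {}"
proof -
  have "w \<notin> S" if "(v,w) \<in> (und K)\<^sup>*" for w
    using that
  proof (induction rule: rtrancl_induct)
    case base
    then show ?case using v .
  next
    case (step a b)
    then show ?case using S unfolding ancestral_def by blast
  qed
  then show ?thesis unfolding ccomp_def by blast
qed

lemma ancestral_add_ccomp:
  assumes cg: "chain_graph K" and S: "ancestral K S" and pa: "parents K (ccomp K v) \<subseteq> S"
  shows "ancestral K (S \<union> ccomp K v)"
  unfolding ancestral_def
proof (intro ballI allI impI)
  fix b a assume b: "b \<in> S \<union> ccomp K v" and e: "(a,b) \<in> und K \<union> dir K"
  show "a \<in> S \<union> ccomp K v"
  proof (cases "b \<in> S")
    case True
    then show ?thesis using S e unfolding ancestral_def by blast
  next
    case False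
    then have "b \<in> ccomp K v" using b by blast
    then show ?thesis using e pa ccomp_und_closed[OF cg] unfolding parents_def by blast
  qed
qed

lemma components_add_ccomp:
  assumes cg: "chain_graph K" and nodes: "nodes K = UNIV" and disj: "S \<inter> ccomp K v = {}"
  shows "{B\<in>comps K. B \<subseteq> S \<union> ccomp K v} = insert (ccomp K v) {B\<in>comps K. B \<subseteq> S}"
proof (intro equalityI subsetI)
  fix B assume B: "B \<in> {B\<in>comps K. B \<subseteq> S \<union> ccomp K v}"
  then obtain w where w: "B = ccomp K w" using comps_eq_range_ccomp[OF nodes] by blast
  show "B \<in> insert (ccomp K v) {B\<in>comps K. B \<subseteq> S}"
  proof (cases "B \<inter> ccomp K v = {}")
    case True
    then show ?thesis using B by blast
  next
    case False
    then show ?thesis using ccomp_disjoint[OF cg] w by blast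
  qed
qed (use comps_eq_range_ccomp[OF nodes] in auto)

definition descendants :: "'n mgraph \<Rightarrow> 'n set \<Rightarrow> 'n set" where
  "descendants K B = {w. \<exists>b\<in>B. (b,w) \<in> (und K \<union> dir K)\<^sup>*}"

lemma ancestral_nondescendants: "ancestral K (- descendants K B)"
  unfolding ancestral_def descendants_def by (blast intro: rtrancl_into_rtrancl)

lemma subset_descendants: "B \<subseteq> descendants K B"
  unfolding descendants_def by blast

lemma parents_nondescendants:
  assumes cg: "chain_graph K"
  shows "parents K (ccomp K v) \<inter> descendants K (ccomp K v) = {}"
proof -
  have False if "(a,b) \<in> dir K" "b \<in> ccomp K v" "b' \<in> ccomp K v" "(b',a) \<in> (und K \<union> dir K)\<^sup>*"
    for a b b'
  proof -
    have "(b,b') \<in> (und K \<union> dir K)\<^sup>*" using und_route[OF ccomp_connected[OF cg that(2,3)]] .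
    then have "(b,a) \<in> (und K \<union> dir K)\<^sup>*" using that(4) by (rule rtrancl_trans)
    then show False by (rule no_pseudocycle[OF cg that(1)])
  qed
  then show ?thesis unfolding parents_def descendants_def by blast
qed

section \<open>Moral family graphs\<close>

abbreviation family_complete :: "'n mgraph \<Rightarrow> 'n set \<Rightarrow> 'n set \<Rightarrow> bool" where
  "family_complete K B C \<equiv> complete_set (nodes (induced K (B \<union> parents K B)))
     (moral_edges (induced K (B \<union> parents K B))) C"

abbreviation family_factorizes ::
  "'n mgraph \<Rightarrow> 'n set \<Rightarrow> (('n \<Rightarrow> real) \<Rightarrow> real) \<Rightarrow> bool" where
  "family_factorizes K B f \<equiv> factorizes_over (nodes (induced K (B \<union> parents K B)))
     (moral_edges (induced K (B \<union> parents K B))) f"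

lemma complete_set_subset: "complete_set W E C \<Longrightarrow> C' \<subseteq> C \<Longrightarrow> complete_set W E C'"
  unfolding complete_set_def by (meson order_trans subsetD)

lemma nodes_induced [simp]: "nodes (induced K I) = nodes K \<inter> I"
  by (simp add: induced_def)

text \<open>Moralization joins all parents of a component: they are parents of one connectivity
  component of the induced family graph, since the component stays connected there.\<close>
lemma parents_family_complete:
  assumes cg: "chain_graph K" and nodes: "nodes K = UNIV"
  shows "family_complete K (ccomp K v) (parents K (ccomp K v))"
proof -
  define B where "B = ccomp K v"
  define F where "F = induced K (B \<union> parents K B)"
  have "(a,b) \<in> moral_edges F" if ab: "a \<in> parents K B" "b \<in> parents K B" "a \<noteq> b" for a b
  proof -
    obtain a' b' where a': "a' \<in> B" "(a,a') \<in> dir K" and b': "b' \<in> B" "(b,b') \<in> dir K"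
      using ab unfolding parents_def by blast
    define B' where "B' = {w. (a',w) \<in> (und F)\<^sup>*}"
    have "und K \<inter> B \<times> B \<subseteq> und F" unfolding F_def induced_def by auto
    then have "(a',b') \<in> (und F)\<^sup>*"
      using rtrancl_mono ccomp_path[OF cg a'(1)[unfolded B_def] b'(1)[unfolded B_def]]
      unfolding B_def by blast
    then have "a \<in> parents F B'" "b \<in> parents F B'"
      using a' b' ab unfolding parents_def B'_def F_def induced_def by auto
    moreover have "B' \<in> comps F"
      using a'(1) nodes unfolding comps_def B'_def F_def by auto
    ultimately show ?thesis using ab(3) unfolding moral_edges_def by blast
  qed
  then show ?thesis
    using nodes unfolding complete_set_def B_def F_def by auto
qed

section \<open>Factorization over undirected graphs\<close>

lemma factorizes_over_nonneg:
  assumes "factorizes_over W E f"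
  shows "0 \<le> f x"
proof -
  obtain \<psi> where "\<And>C. complete_set W E C \<Longrightarrow> (\<forall>x. 0 \<le> \<psi> C x)"
    and "f x = (\<Prod>C\<in>{C. complete_set W E C}. \<psi> C x)"
    using assms unfolding factorizes_over_def by blast
  then show ?thesis by (auto intro!: prod_nonneg)
qed

lemma factorizes_over_one: "factorizes_over W E (\<lambda>_. 1)"
  unfolding factorizes_over_def depends_only_on_def by (rule exI[of _ "\<lambda>_ _. 1"]) simp

lemma factorizes_over_mult:
  assumes "factorizes_over W E f" and "factorizes_over W E g"
  shows "factorizes_over W E (\<lambda>x. f x * g x)"
proof -
  obtain \<phi> \<psi> where
      \<phi>: "\<And>C. complete_set W E C \<Longrightarrow> depends_only_on C (\<phi> C) \<and> (\<forall>x. 0 \<le> \<phi> C x)"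
        "\<And>x. f x = (\<Prod>C\<in>{C. complete_set W E C}. \<phi> C x)"
    and \<psi>: "\<And>C. complete_set W E C \<Longrightarrow> depends_only_on C (\<psi> C) \<and> (\<forall>x. 0 \<le> \<psi> C x)"
        "\<And>x. g x = (\<Prod>C\<in>{C. complete_set W E C}. \<psi> C x)"
    using assms unfolding factorizes_over_def by metis
  have "depends_only_on C (\<lambda>x. \<phi> C x * \<psi> C x) \<and> (\<forall>x. 0 \<le> \<phi> C x * \<psi> C x)"
    if "complete_set W E C" for C
    using \<phi>(1)[OF that] \<psi>(1)[OF that] unfolding depends_only_on_def by (metis mult_nonneg_nonneg)
  moreover have "f x * g x = (\<Prod>C\<in>{C. complete_set W E C}. \<phi> C x * \<psi> C x)" for x
    by (simp add: \<phi>(2) \<psi>(2) prod.distrib)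
  ultimately show ?thesis
    unfolding factorizes_over_def by (intro exI[of _ "\<lambda>C x. \<phi> C x * \<psi> C x"]) blast
qed

lemma factorizes_over_prod:
  "(\<And>i. i \<in> I \<Longrightarrow> factorizes_over W E (f i)) \<Longrightarrow> factorizes_over W E (\<lambda>x. \<Prod>i\<in>I. f i x)"
  by (induction I rule: infinite_finite_induct)
    (simp_all add: factorizes_over_one factorizes_over_mult)

lemma factorizes_over_complete:
  fixes f :: "('n::finite \<Rightarrow> real) \<Rightarrow> real"
  assumes C0: "complete_set W E C0" and f: "depends_only_on C0 f" "\<And>x. 0 \<le> f x"
  shows "factorizes_over W E f"
proof -
  define \<psi> where "\<psi> C x = (if C = C0 then f x else 1)" for C x
  have "depends_only_on C (\<psi> C) \<and> (\<forall>x. 0 \<le> \<psi> C x)" for C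
    using f by (auto simp: \<psi>_def depends_only_on_def)
  moreover have "f x = (\<Prod>C\<in>{C. complete_set W E C}. \<psi> C x)" for x
    using C0 by (simp add: \<psi>_def prod.delta)
  ultimately show ?thesis
    unfolding factorizes_over_def by (intro exI[of _ \<psi>]) blast
qed

lemma factorizes_over_transfer:
  fixes f :: "('n::finite \<Rightarrow> real) \<Rightarrow> real"
  assumes f: "factorizes_over W E f"
    and complete: "\<And>C. complete_set W E C \<Longrightarrow> complete_set W' E' C"
  shows "factorizes_over W' E' f"
proof -
  obtain \<psi> where
      \<psi>: "\<And>C. complete_set W E C \<Longrightarrow> depends_only_on C (\<psi> C) \<and> (\<forall>x. 0 \<le> \<psi> C x)"
        "\<And>x. f x = (\<Prod>C\<in>{C. complete_set W E C}. \<psi> C x)"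
    using f unfolding factorizes_over_def by metis
  define \<psi>' where "\<psi>' C x = (if complete_set W E C then \<psi> C x else 1)" for C x
  have "depends_only_on C (\<psi>' C) \<and> (\<forall>x. 0 \<le> \<psi>' C x)" for C
    using \<psi>(1) by (auto simp: \<psi>'_def depends_only_on_def)
  moreover have "f x = (\<Prod>C\<in>{C. complete_set W' E' C}. \<psi>' C x)" for x
  proof -
    have "(\<Prod>C\<in>{C. complete_set W' E' C}. \<psi>' C x) = (\<Prod>C\<in>{C. complete_set W E C}. \<psi> C x)"
      using complete by (intro prod.mono_neutral_cong_right) (auto simp: \<psi>'_def)
    then show ?thesis using \<psi>(2) by simp
  qed
  ultimately show ?thesis
    unfolding factorizes_over_def by (intro exI[of _ \<psi>']) blast
qed

section \<open>Marginals of positive densities\<close>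

text \<open>A strictly positive function all of whose sections are integrable, so that all marginals
  exist; regular Gaussian densities are of this kind.\<close>
definition pos_density :: "(('n::finite \<Rightarrow> real) \<Rightarrow> real) \<Rightarrow> bool" where
  "pos_density p \<longleftrightarrow> (\<forall>x. 0 < p x) \<and>
     (\<forall>D x. integrable (PiM D (\<lambda>_. lborel)) (\<lambda>y. p (override_on x y D)))"

lemma marg_override:
  "marg p A x = (\<integral>y. p (override_on x y (UNIV - A)) \<partial>PiM (UNIV - A) (\<lambda>_. lborel))"
proof -
  have "merge A (UNIV - A) (x, y) = override_on x y (UNIV - A)" for y :: "'a \<Rightarrow> real"
    by (auto simp: merge_def override_on_def)
  then show ?thesis by (simp add: marg_def)
qed

lemma marg_cong: "(\<And>i. i \<in> A \<Longrightarrow> x i = x' i) \<Longrightarrow> marg p A x = marg p A x'"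
proof -
  assume "\<And>i. i \<in> A \<Longrightarrow> x i = x' i"
  then have "override_on x y (UNIV - A) = override_on x' y (UNIV - A)" for y :: "'a \<Rightarrow> real"
    by (auto simp: override_on_def)
  then show ?thesis by (simp add: marg_override)
qed

lemma marg_UNIV: "marg p UNIV x = p x"
proof -
  have "merge UNIV {} (x, y) = x" for y :: "'a \<Rightarrow> real"
    by (auto simp: merge_def)
  then show ?thesis
    unfolding marg_def by (simp add: PiM_empty lebesgue_integral_count_space_finite)
qed

lemma marg_uminus: "marg (\<lambda>x. - p x) A x = - marg p A x"
  by (simp add: marg_def)

lemma PiM_lborel_space_nonnull:
  "emeasure (PiM J (\<lambda>_::'n::finite. lborel::real measure)) (space (PiM J (\<lambda>_. lborel))) \<noteq> 0"
proof -
  interpret product_sigma_finite "\<lambda>_::'n. lborel::real measure" by standard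
  have "emeasure (PiM J (\<lambda>_::'n. lborel::real measure)) (PiE J (\<lambda>_. UNIV))
      = (\<Prod>i\<in>J. emeasure lborel (UNIV::real set))"
    by (rule emeasure_PiM) auto
  then show ?thesis by (simp add: space_PiM)
qed

text \<open>Marginals of a positive density are positive (a product of Lebesgue measures is not null).\<close>
lemma marg_pos:
  assumes "pos_density p"
  shows "0 < marg p A x"
proof -
  define M where "M = PiM (UNIV - A) (\<lambda>_::'a. lborel::real measure)"
  define f where "f y = p (override_on x y (UNIV - A))" for y
  have int: "integrable M f" and pos: "\<And>y. 0 < f y"
    using assms unfolding pos_density_def f_def M_def by blast+
  have "integral\<^sup>L M f \<noteq> 0"
  proof
    assume "integral\<^sup>L M f = 0"
    then have "AE y in M. f y = 0"
      using integral_nonneg_eq_0_iff_AE[OF int] pos by (auto intro: less_imp_le)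
    then have "AE y in M. False"
      by (rule eventually_mono) (metis less_irrefl pos)
    then show False
      using PiM_lborel_space_nonnull ae_filter_eq_bot_iff trivial_limit_def
      unfolding M_def by metis
  qed
  moreover have "0 \<le> integral\<^sup>L M f"
    using pos by (intro integral_nonneg_AE) (auto intro: less_imp_le)
  ultimately show ?thesis unfolding marg_override f_def M_def by simp
qed

text \<open>Fubini: a marginal is obtained by integrating out further coordinates \<open>D\<close>
  from a larger marginal.\<close>
lemma marg_integrate_out:
  assumes p: "pos_density p" and AD: "A \<inter> D = {}"
  shows "marg p A x = (\<integral>y. marg p (A \<union> D) (override_on x y D) \<partial>PiM D (\<lambda>_. lborel))"
proof -
  interpret product_sigma_finite "\<lambda>_::'a. lborel::real measure" by standard
  define E where "E = UNIV - A - D"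
  have U: "UNIV - A = D \<union> E" and DE: "D \<inter> E = {}" and U2: "UNIV - (A \<union> D) = E"
    using AD unfolding E_def by blast+
  define f where "f z = p (override_on x z (D \<union> E))" for z
  have int: "integrable (PiM (D \<union> E) (\<lambda>_. lborel)) f"
    using p unfolding pos_density_def f_def by blast
  have split: "f (merge D E (y, w)) = p (override_on (override_on x y D) w E)" for y w
    unfolding f_def using DE by (intro arg_cong[where f=p]) (auto simp: merge_def override_on_def fun_eq_iff)
  have "marg p A x = integral\<^sup>L (PiM (D \<union> E) (\<lambda>_. lborel)) f"
    unfolding marg_override f_def U ..
  also have "\<dots> = (\<integral>y. (\<integral>w. f (merge D E (y, w)) \<partial>PiM E (\<lambda>_. lborel)) \<partial>PiM D (\<lambda>_. lborel))"
    by (rule product_integral_fold[OF DE _ _ int]) simp_all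
  also have "\<dots> = (\<integral>y. marg p (A \<union> D) (override_on x y D) \<partial>PiM D (\<lambda>_. lborel))"
    unfolding split marg_override U2 ..
  finally show ?thesis .
qed

lemma cond_density_integral:
  assumes p: "pos_density p" and AD: "A \<inter> D = {}"
  shows "(\<integral>y. cond_density p D A (override_on x y D) \<partial>PiM D (\<lambda>_. lborel)) = 1"
proof -
  have "marg p A (override_on x y D) = marg p A x" for y
    using AD by (intro marg_cong) (auto simp: override_on_def)
  then have "(\<integral>y. cond_density p D A (override_on x y D) \<partial>PiM D (\<lambda>_. lborel))
      = (\<integral>y. marg p (A \<union> D) (override_on x y D) \<partial>PiM D (\<lambda>_. lborel)) / marg p A x"
    by (simp add: cond_density_def Un_commute)
  also have "\<dots> = marg p A x / marg p A x"
    using marg_integrate_out[OF p AD] by simp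
  also have "\<dots> = 1"
    using marg_pos[OF p] by (simp add: less_imp_neq[symmetric])
  finally show ?thesis .
qed

lemma marg_factor_out:
  assumes p: "pos_density p" and AD: "A \<inter> D = {}" and A0: "A0 \<subseteq> A"
    and factor: "\<And>z. marg p (A \<union> D) z = marg p (A0 \<union> D) z * f z"
    and f: "depends_only_on A f"
  shows "marg p A x = marg p A0 x * f x"
proof -
  have fx: "f (override_on x y D) = f x" for y
  proof -
    have "\<forall>i\<in>A. override_on x y D i = x i" using AD by (auto simp: override_on_def)
    with f show ?thesis unfolding depends_only_on_def by blast
  qed
  have "marg p A x = (\<integral>y. marg p (A0 \<union> D) (override_on x y D) * f x \<partial>PiM D (\<lambda>_. lborel))"
    unfolding marg_integrate_out[OF p AD] factor fx ..
  also have "\<dots> = marg p A0 x * f x"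
  proof -
    have "A0 \<inter> D = {}" using AD A0 by blast
    then show ?thesis using marg_integrate_out[OF p, of A0 D x] by simp
  qed
  finally show ?thesis .
qed

section \<open>Regular Gaussian densities\<close>

lemma pos_def_inverse:
  fixes S :: "real^'n^'n"
  assumes "pos_def S"
  shows "invertible S" and "S ** matrix_inv S = mat 1"
proof -
  have "x = 0" if "S *v x = 0" for x
    using assms that unfolding pos_def_def by force
  then obtain B where "B ** S = mat 1" using matrix_left_invertible_ker by blast
  then show "invertible S"
    using matrix_left_right_inverse unfolding invertible_def by blast
  then show "S ** matrix_inv S = mat 1"
    unfolding invertible_def matrix_inv_def by (rule someI2_ex) blast
qed

lemma pos_def_inverse_form:
  fixes S :: "real^'n^'n"
  assumes pd: "pos_def S" and v: "v \<noteq> 0"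
  shows "v \<bullet> (matrix_inv S *v v) > 0"
proof -
  define w where "w = matrix_inv S *v v"
  have Sw: "S *v w = v"
    unfolding w_def matrix_vector_mul_assoc pos_def_inverse(2)[OF pd] by simp
  then have "w \<noteq> 0" using v by auto
  then have "w \<bullet> (S *v w) > 0" using pd unfolding pos_def_def by blast
  then show ?thesis using Sw unfolding w_def by (simp add: inner_commute)
qed

text \<open>A positive definite quadratic form is bounded below by a multiple of the squared norm
  (minimum on the unit sphere).\<close>
lemma pos_form_lower_bound:
  fixes M :: "real^'n^'n"
  assumes pos: "\<And>v. v \<noteq> 0 \<Longrightarrow> v \<bullet> (M *v v) > 0"
  shows "\<exists>l>0. \<forall>v. l * (v \<bullet> v) \<le> v \<bullet> (M *v v)"
proof -
  define Q where "Q v = v \<bullet> (M *v v)" for v :: "real^'n"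
  have cont: "continuous_on (sphere 0 1) Q" unfolding Q_def by (intro continuous_intros)
  have "axis undefined 1 \<in> sphere (0::real^'n) 1" by simp
  then have ne: "sphere (0::real^'n) 1 \<noteq> {}" by blast
  obtain u where u: "u \<in> sphere 0 1" and umin: "\<And>w. w \<in> sphere 0 1 \<Longrightarrow> Q u \<le> Q w"
    using continuous_attains_inf[OF compact_sphere ne cont] by blast
  have "Q u * (v \<bullet> v) \<le> Q v" for v
  proof (cases "v = 0")
    case True
    then show ?thesis by (simp add: Q_def)
  next
    case False
    define w where "w = (1 / norm v) *\<^sub>R v"
    have w: "w \<in> sphere 0 1" and vw: "v = norm v *\<^sub>R w"
      using False unfolding w_def by simp_all
    have "Q v = (norm v)\<^sup>2 * Q w"
      using w by (subst (1 2) vw) (simp add: Q_def matrix_vector_mult_scaleR power2_eq_square)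
    then show ?thesis
      using umin[OF w] by (simp add: power2_norm_eq_inner[symmetric] mult.commute mult_right_mono)
  qed
  moreover have "Q u > 0" unfolding Q_def using u by (intro pos) auto
  ultimately show ?thesis unfolding Q_def by blast
qed

text \<open>One-dimensional Gaussian kernels are integrable (multiples of normal densities).\<close>
lemma gaussian_kernel_integrable:
  assumes l: "l > (0::real)"
  shows "integrable lborel (\<lambda>t. exp (- (l/2) * (t - m)\<^sup>2))"
proof -
  define \<sigma> where "\<sigma> = sqrt (1/l)"
  have \<sigma>: "\<sigma> > 0" "\<sigma>\<^sup>2 = 1/l" using l unfolding \<sigma>_def by simp_all
  have "exp (- (l/2) * (t - m)\<^sup>2) = sqrt (2 * pi / l) * normal_density m \<sigma> t" for t
    unfolding normal_density_def \<sigma>(2) using l \<sigma>(1) by (simp add: field_simps)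
  then show ?thesis
    by (simp add: integrable_normal_density \<sigma>(1))
qed

lemma override_vec_measurable:
  "(\<lambda>y. vec_of (override_on x y D)) \<in> borel_measurable (PiM D (\<lambda>_::'n::finite. lborel))"
  unfolding borel_measurable_euclidean_space[where 'c="real^'n"]
proof
  fix b :: "real^'n" assume "b \<in> Basis"
  then obtain k where k: "b = axis k 1" unfolding Basis_vec_def by auto
  have "(\<lambda>y. override_on x y D k) \<in> borel_measurable (PiM D (\<lambda>_. lborel))"
  proof (cases "k \<in> D")
    case True
    then show ?thesis
      unfolding override_on_def
      using measurable_component_singleton[of k D "\<lambda>_. lborel"] measurable_cong_sets[OF refl sets_lborel]
      by simp
  qed (simp add: override_on_def)
  then show "(\<lambda>y. vec_of (override_on x y D) \<bullet> b) \<in> borel_measurable (PiM D (\<lambda>_. lborel))"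
    unfolding k cart_eq_inner_axis[symmetric] vec_of_def by simp
qed

text \<open>Every section of a Gaussian kernel is integrable: it is dominated by a product of
  one-dimensional Gaussian kernels.\<close>
lemma gaussian_form_integrable:
  fixes M :: "real^'n^'n" and \<mu> :: "real^'n"
  assumes l: "l > 0" and lb: "\<And>v. l * (v \<bullet> v) \<le> v \<bullet> (M *v v)"
  shows "integrable (PiM D (\<lambda>_. lborel))
     (\<lambda>y. exp (- (1/2) * ((vec_of (override_on x y D) - \<mu>) \<bullet> (M *v (vec_of (override_on x y D) - \<mu>)))))"
    (is "integrable ?P ?g")
proof -
  interpret product_sigma_finite "\<lambda>_::'n. lborel::real measure" by standard
  define h where "h i t = exp (- (l/2) * (t - \<mu>$i)\<^sup>2)" for i t
  have dom: "integrable ?P (\<lambda>y. \<Prod>i\<in>D. h i (y i))"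
    unfolding h_def by (intro product_integrable_prod gaussian_kernel_integrable l) simp
  have "continuous_on UNIV (\<lambda>v::real^'n. exp (- (1/2) * ((v - \<mu>) \<bullet> (M *v v - M *v \<mu>))))"
    by (intro continuous_intros)
  from borel_measurable_continuous_on[OF this override_vec_measurable]
  have "?g \<in> borel_measurable ?P" by (simp add: matrix_vector_mult_diff_distrib)
  moreover have "norm (?g y) \<le> norm (\<Prod>i\<in>D. h i (y i))" for y
  proof -
    define d where "d = vec_of (override_on x y D) - \<mu>"
    have "(\<Sum>i\<in>D. (y i - \<mu>$i)\<^sup>2) = (\<Sum>i\<in>D. (d$i)\<^sup>2)"
      by (simp add: d_def vec_of_def override_on_def)
    also have "\<dots> \<le> (\<Sum>i\<in>UNIV. (d$i)\<^sup>2)"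
      by (rule sum_mono2) simp_all
    also have "\<dots> = d \<bullet> d" by (simp add: inner_vec_def power2_eq_square)
    finally have "l * (\<Sum>i\<in>D. (y i - \<mu>$i)\<^sup>2) \<le> d \<bullet> (M *v d)"
      using l lb[of d] by (meson less_imp_le mult_left_mono order_trans)
    then have "exp (- (1/2) * (d \<bullet> (M *v d))) \<le> exp (- (l/2) * (\<Sum>i\<in>D. (y i - \<mu>$i)\<^sup>2))"
      by simp
    also have "\<dots> = (\<Prod>i\<in>D. h i (y i))"
      unfolding h_def by (simp add: exp_sum[symmetric] sum_distrib_left)
    finally have "exp (- (1/2) * (d \<bullet> (M *v d))) \<le> (\<Prod>i\<in>D. h i (y i))" .
    moreover have "(\<Prod>i\<in>D. h i (y i)) \<ge> 0" unfolding h_def by (intro prod_nonneg) simp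
    ultimately show ?thesis unfolding d_def by simp
  qed
  ultimately show ?thesis
    by (intro Bochner_Integration.integrable_bound[OF dom]) (auto intro: AE_I2)
qed

text \<open>A regular Gaussian density, or its negative, is a positive density all of whose sections
  are integrable.  (The sign of the normalizing constant is not computed here: it is fixed
  later by the non-negativity that the factorization property imposes.)\<close>
lemma regular_gaussian_pos_density:
  fixes p :: "('n::finite \<Rightarrow> real) \<Rightarrow> real"
  assumes "regular_gaussian p"
  shows "pos_density p \<or> pos_density (\<lambda>x. - p x)"
proof -
  obtain \<mu> S where pd: "pos_def S" and p_eq: "p = gauss_density \<mu> S"
    using assms unfolding regular_gaussian_def by blast
  define c where "c = (2 * pi) powr (- real CARD('n) / 2) / sqrt (det S)"
  define e where "e x = exp (- (1/2) * ((vec_of x - \<mu>) \<bullet> (matrix_inv S *v (vec_of x - \<mu>))))"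
    for x :: "'n \<Rightarrow> real"
  have p: "p = (\<lambda>x. c * e x)" by (simp add: p_eq gauss_density_def e_def c_def fun_eq_iff)
  have "det S \<noteq> 0" using pos_def_inverse(1)[OF pd] invertible_det_nz by blast
  then have c: "c \<noteq> 0" unfolding c_def by simp
  obtain l where "l > 0" "\<And>v. l * (v \<bullet> v) \<le> v \<bullet> (matrix_inv S *v v)"
    using pos_form_lower_bound[of "matrix_inv S"] pos_def_inverse_form[OF pd] by blast
  then have eint: "\<And>D x. integrable (PiM D (\<lambda>_. lborel)) (\<lambda>y. e (override_on x y D))"
    unfolding e_def by (rule gaussian_form_integrable)
  have "pos_density (\<lambda>x. \<bar>c\<bar> * e x)"
    unfolding pos_density_def using c eint by (simp add: e_def)
  moreover have "(\<lambda>x. \<bar>c\<bar> * e x) = p \<or> (\<lambda>x. \<bar>c\<bar> * e x) = (\<lambda>x. - p x)"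
    unfolding p by (auto simp: abs_if fun_eq_iff)
  ultimately show ?thesis by auto
qed

section \<open>Marginals on ancestral sets\<close>

lemma cond_density_cong:
  "(\<And>i. i \<in> B \<union> A \<Longrightarrow> x i = x' i) \<Longrightarrow> cond_density p B A x = cond_density p B A x'"
  unfolding cond_density_def by (metis marg_cong UnCI)

locale cg_density =
  fixes K :: "'n::finite mgraph" and p :: "('n \<Rightarrow> real) \<Rightarrow> real"
  assumes chain: "chain_graph K" and nodes: "nodes K = UNIV" and pos: "pos_density p"
    and factor: "\<And>x. p x = (\<Prod>B\<in>comps K. cond_density p B (parents K B) x)"
begin

abbreviation cond :: "'n set \<Rightarrow> ('n \<Rightarrow> real) \<Rightarrow> real" where
  "cond B \<equiv> cond_density p B (parents K B)"

text \<open>Induction on the size of the complement: an outside component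
  whose parents lie in the set is added, and integrating it out removes its factor.\<close>
lemma marg_ancestral:
  assumes "ancestral K S"
  shows "marg p S x = (\<Prod>B\<in>{B\<in>comps K. B \<subseteq> S}. cond B x)"
  using assms
proof (induction "card (UNIV - S)" arbitrary: S x rule: less_induct)
  case less
  show ?case
  proof (cases "S = UNIV")
    case True
    then show ?thesis using factor[of x] by (simp add: marg_UNIV)
  next
    case False
    then obtain v where v: "v \<notin> S" and pa: "parents K (ccomp K v) \<subseteq> S"
      using minimal_component_outside[OF chain] by blast
    define C where "C = ccomp K v"
    have disj: "S \<inter> C = {}" unfolding C_def by (rule ancestral_ccomp_disjoint[OF less.prems v])
    have "card (UNIV - (S \<union> C)) < card (UNIV - S)"
      using v ccomp_self[of v K] by (intro psubset_card_mono) (auto simp: C_def)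
    moreover have "ancestral K (S \<union> C)"
      unfolding C_def by (rule ancestral_add_ccomp[OF chain less.prems pa])
    ultimately have IH: "marg p (S \<union> C) z = (\<Prod>B\<in>{B\<in>comps K. B \<subseteq> S \<union> C}. cond B z)" for z
      using less.hyps by blast
    have C_new: "C \<notin> {B\<in>comps K. B \<subseteq> S}" using v ccomp_self[of v K] unfolding C_def by blast
    have unchanged: "cond B (override_on x y C) = cond B x" if "B \<in> {B\<in>comps K. B \<subseteq> S}" for B y
    proof -
      have "B \<union> parents K B \<subseteq> S"
        using that less.prems unfolding ancestral_def parents_def by blast
      then show ?thesis using disj by (intro cond_density_cong) (auto simp: override_on_def)
    qed
    have "marg p S x = (\<integral>y. marg p (S \<union> C) (override_on x y C) \<partial>PiM C (\<lambda>_. lborel))"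
      by (rule marg_integrate_out[OF pos disj])
    also have "\<dots> = (\<integral>y. (\<Prod>B\<in>{B\<in>comps K. B \<subseteq> S}. cond B x) * cond C (override_on x y C)
        \<partial>PiM C (\<lambda>_. lborel))"
      unfolding IH components_add_ccomp[OF chain nodes disj[unfolded C_def], folded C_def]
      using C_new unchanged by (simp add: mult.commute)
    also have "\<dots> = (\<Prod>B\<in>{B\<in>comps K. B \<subseteq> S}. cond B x)"
    proof -
      have "parents K C \<inter> C = {}" using pa disj unfolding C_def by blast
      then show ?thesis using cond_density_integral[OF pos, of "parents K C" C x] by simp
    qed
    finally show ?thesis .
  qed
qed

end

section \<open>Nested chain graphs\<close>

locale nested_chain_graphs =
  fixes G H :: "'n mgraph"
  assumes chain_G: "chain_graph G" and chain_H: "chain_graph H"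
    and nodes_G: "nodes G = UNIV" and nodes_H: "nodes H = UNIV"
    and und_sub: "und H \<subseteq> und G" and dir_sub: "dir H \<subseteq> dir G"
begin

lemma comps_G: "B \<in> comps G \<longleftrightarrow> (\<exists>w. B = ccomp G w)"
  using comps_eq_range_ccomp[OF nodes_G] by auto

lemma comps_H: "K \<in> comps H \<longleftrightarrow> (\<exists>v. K = ccomp H v)"
  using comps_eq_range_ccomp[OF nodes_H] by auto

lemma ccomp_H_within: "ccomp H v \<inter> ccomp G w \<noteq> {} \<Longrightarrow> ccomp H v \<subseteq> ccomp G w"
  using ccomp_mono[OF und_sub, of v] ccomp_disjoint[OF chain_G, of v w] by blast

lemma comp_H_within_G:
  assumes "K \<in> comps H"
  shows "\<exists>B\<in>comps G. K \<subseteq> B"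
proof -
  obtain v where v: "K = ccomp H v" using assms comps_H by blast
  have "ccomp G v \<in> comps G" unfolding comps_eq_range_ccomp[OF nodes_G] by blast
  then show ?thesis using ccomp_mono[OF und_sub, of v] v by blast
qed

lemma components_split:
  assumes "B \<in> comps G"
  shows "{K\<in>comps H. K \<subseteq> S \<union> B} = {K\<in>comps H. K \<subseteq> S} \<union> {K\<in>comps H. K \<subseteq> B}"
  using assms ccomp_H_within unfolding comps_G comps_H by blast

lemma parents_sub: "K \<subseteq> B \<Longrightarrow> parents H K \<subseteq> parents G B"
  using dir_sub unfolding parents_def by blast

text \<open>Complete sets of the moral family graph of a component of \<open>H\<close> remain complete in the
  moral family graph of the enclosing component of \<open>G\<close>: edges of \<open>H\<close> are edges of \<open>G\<close>,
  and a moral edge of \<open>H\<close> between non-adjacent nodes joins two parents of the component.\<close>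
lemma family_complete_transfer:
  assumes KB: "ccomp H v \<subseteq> ccomp G w" and C: "family_complete H (ccomp H v) C"
  shows "family_complete G (ccomp G w) C"
proof -
  define K B where "K = ccomp H v" and "B = ccomp G w"
  define I W where "I = K \<union> parents H K" and "W = B \<union> parents G B"
  have IW: "I \<subseteq> W" using parents_sub[OF KB] KB unfolding I_def W_def K_def B_def by blast
  have CI: "C \<subseteq> I" using C nodes_H unfolding complete_set_def I_def K_def by simp
  have "(a,b) \<in> moral_edges (induced G W)" if ab: "a \<in> C" "b \<in> C" "a \<noteq> b" for a b
  proof -
    have m: "(a,b) \<in> moral_edges (induced H I)"
      using C ab unfolding complete_set_def I_def K_def by blast
    show ?thesis
    proof (cases "(a,b) \<in> und H \<or> (a,b) \<in> dir H \<or> (b,a) \<in> dir H")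
      case True
      then show ?thesis using und_sub dir_sub ab CI IW unfolding moral_edges_def induced_def by auto
    next
      case False
      then obtain a' b' where "(a,a') \<in> dir H" "(b,b') \<in> dir H" "a' \<in> I" "b' \<in> I"
        using m unfolding moral_edges_def parents_def induced_def by auto
      then have "a \<in> parents H K" "b \<in> parents H K"
        using parent_of_ccomp_directed[OF chain_H] ab CI unfolding I_def K_def by blast+
      then have "a \<in> parents G B" "b \<in> parents G B" using parents_sub[OF KB] unfolding K_def B_def by blast+
      then show ?thesis
        using parents_family_complete[OF chain_G nodes_G, of w] ab(3)
        unfolding complete_set_def W_def B_def by blast
    qed
  qed
  then show ?thesis using CI IW nodes_G unfolding complete_set_def W_def B_def by auto
qed

end

locale nested_density = nested_chain_graphs G H
  for G H :: "'n::finite mgraph" +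
  fixes p :: "('n \<Rightarrow> real) \<Rightarrow> real"
  assumes pos: "pos_density p"
    and factor_H: "\<And>x. p x = (\<Prod>K\<in>comps H. cond_density p K (parents H K) x)"
begin

sublocale H: cg_density H p
  using chain_H nodes_H pos factor_H by unfold_locales

text \<open>Both the non-descendants \<open>N\<close> of \<open>B\<close> and \<open>N \<union> B\<close> are ancestral in \<open>G\<close>, hence in \<open>H\<close>;
  comparing their marginals and integrating out \<open>N\<close> minus the parents gives the claim.\<close>
lemma family_marg:
  assumes B: "B \<in> comps G"
  shows "marg p (B \<union> parents G B) x = marg p (parents G B) x * (\<Prod>K\<in>{K\<in>comps H. K \<subseteq> B}. H.cond K x)"
proof -
  obtain w where w: "B = ccomp G w" using B comps_G by blast
  define N where "N = - descendants G B"
  define f where "f z = (\<Prod>K\<in>{K\<in>comps H. K \<subseteq> B}. H.cond K z)" for z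
  have NB: "N \<inter> B = {}" unfolding N_def using subset_descendants[of B G] by auto
  have paN: "parents G B \<subseteq> N" using parents_nondescendants[OF chain_G] w unfolding N_def by blast
  have anc_N: "ancestral G N" unfolding N_def by (rule ancestral_nondescendants)
  have anc_NB: "ancestral G (N \<union> B)"
    unfolding w by (rule ancestral_add_ccomp[OF chain_G anc_N paN[unfolded w]])
  have disj: "{K\<in>comps H. K \<subseteq> N} \<inter> {K\<in>comps H. K \<subseteq> B} = {}"
  proof -
    have "K = {}" if "K \<subseteq> N" "K \<subseteq> B" for K using that NB by blast
    then show ?thesis using comps_nonempty[OF nodes_H] by blast
  qed
  have NB_marg: "marg p (N \<union> B) z = marg p N z * f z" for z
  proof -
    have "marg p (N \<union> B) z = (\<Prod>K\<in>{K\<in>comps H. K \<subseteq> N} \<union> {K\<in>comps H. K \<subseteq> B}. H.cond K z)"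
      using H.marg_ancestral[OF ancestral_mono[OF und_sub dir_sub anc_NB]]
      unfolding components_split[OF B] .
    also have "\<dots> = marg p N z * f z"
      unfolding prod.union_disjoint[OF finite finite disj] f_def
      using H.marg_ancestral[OF ancestral_mono[OF und_sub dir_sub anc_N]] by simp
    finally show ?thesis .
  qed
  have split: "marg p ((B \<union> parents G B) \<union> (N - parents G B)) z
      = marg p (parents G B \<union> (N - parents G B)) z * f z" for z
  proof -
    have "(B \<union> parents G B) \<union> (N - parents G B) = N \<union> B" "parents G B \<union> (N - parents G B) = N"
      using paN by blast+
    then show ?thesis using NB_marg by simp
  qed
  have "depends_only_on (B \<union> parents G B) f"
    unfolding depends_only_on_def
  proof (intro allI impI)
    fix z z' :: "'n \<Rightarrow> real" assume zz': "\<forall>i\<in>B \<union> parents G B. z i = z' i"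
    have "H.cond K z = H.cond K z'" if "K \<subseteq> B" for K
      using zz' parents_sub[OF that] that by (intro cond_density_cong) blast
    then show "f z = f z'" unfolding f_def by (intro prod.cong) auto
  qed
  moreover have "(B \<union> parents G B) \<inter> (N - parents G B) = {}" using NB by blast
  ultimately show ?thesis
    using marg_factor_out[OF pos _ _ split] unfolding f_def by blast
qed

lemma cond_G:
  assumes "B \<in> comps G"
  shows "cond_density p B (parents G B) x = (\<Prod>K\<in>{K\<in>comps H. K \<subseteq> B}. H.cond K x)"
  using family_marg[OF assms] marg_pos[OF pos, of "parents G B" x] by (simp add: cond_density_def)

text \<open>The density factorizes along \<open>G\<close>: group the factors of the \<open>H\<close>-factorization by the
  components of \<open>G\<close> containing them.\<close>
lemma factor_G: "p x = (\<Prod>B\<in>comps G. cond_density p B (parents G B) x)"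
proof -
  have partition: "comps H = (\<Union>B\<in>comps G. {K\<in>comps H. K \<subseteq> B})"
    using comp_H_within_G by blast
  have disjoint: "{K\<in>comps H. K \<subseteq> B} \<inter> {K\<in>comps H. K \<subseteq> B'} = {}"
    if "B \<in> comps G" "B' \<in> comps G" "B \<noteq> B'" for B B'
  proof -
    have "B \<inter> B' = {}" by (rule comps_disjoint[OF chain_G nodes_G that])
    then show ?thesis using comps_nonempty[OF nodes_H] by blast
  qed
  have "p x = (\<Prod>K\<in>(\<Union>B\<in>comps G. {K\<in>comps H. K \<subseteq> B}). H.cond K x)"
    unfolding factor_H[of x] by (rule prod.cong[OF partition refl])
  also have "\<dots> = (\<Prod>B\<in>comps G. \<Prod>K\<in>{K\<in>comps H. K \<subseteq> B}. H.cond K x)"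
    using disjoint by (intro prod.UNION_disjoint) auto
  also have "\<dots> = (\<Prod>B\<in>comps G. cond_density p B (parents G B) x)"
    using cond_G by simp
  finally show ?thesis .
qed

text \<open>Each family marginal of \<open>G\<close> factorizes over the moral family graph of \<open>G\<close>: it is the
  parent marginal (a function of a complete set) times, for every component \<open>K\<close> of \<open>H\<close>
  inside, the family marginal of \<open>K\<close> (which factorizes over the moral family graph of \<open>H\<close>,
  whose complete sets stay complete) divided by the marginal of the parents of \<open>K\<close>
  (again a complete set).\<close>
lemma factorizes_G:
  assumes B: "B \<in> comps G"
    and fac_H: "\<And>K. K \<in> comps H \<Longrightarrow> family_factorizes H K (marg p (K \<union> parents H K))"
  shows "family_factorizes G B (marg p (B \<union> parents G B))"
proof -
  obtain w where w: "B = ccomp G w" using B comps_G by blast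
  have pa_complete: "family_complete G B (parents G B)"
    unfolding w by (rule parents_family_complete[OF chain_G nodes_G])
  have marg_fac: "family_factorizes G B (\<lambda>x. g (marg p A x))"
    if A: "A \<subseteq> parents G B" and g: "\<And>t. t > 0 \<Longrightarrow> g t \<ge> 0" for A and g :: "real \<Rightarrow> real"
  proof (rule factorizes_over_complete)
    show "family_complete G B A" by (rule complete_set_subset[OF pa_complete A])
    show "depends_only_on A (\<lambda>x. g (marg p A x))"
      unfolding depends_only_on_def by (metis marg_cong)
    show "0 \<le> g (marg p A x)" for x by (rule g[OF marg_pos[OF pos]])
  qed
  have K_fac: "family_factorizes G B (\<lambda>x. marg p (K \<union> parents H K) x * (1 / marg p (parents H K) x))"
    if K: "K \<in> comps H" "K \<subseteq> B" for K
  proof (rule factorizes_over_mult)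
    obtain v where v: "K = ccomp H v" using K(1) comps_H by blast
    have "family_complete G B C" if "family_complete H K C" for C
      using family_complete_transfer[of v w C] that K(2) unfolding v w by blast
    then show "family_factorizes G B (marg p (K \<union> parents H K))"
      by (rule factorizes_over_transfer[OF fac_H[OF K(1)]])
    show "family_factorizes G B (\<lambda>x. 1 / marg p (parents H K) x)"
      using marg_fac[OF parents_sub[OF K(2)], of "\<lambda>t. 1 / t"] by simp
  qed
  have "family_factorizes G B (\<lambda>x. marg p (parents G B) x *
      (\<Prod>K\<in>{K\<in>comps H. K \<subseteq> B}. marg p (K \<union> parents H K) x * (1 / marg p (parents H K) x)))"
  proof (rule factorizes_over_mult)
    show "family_factorizes G B (marg p (parents G B))"
      using marg_fac[OF order_refl, of "\<lambda>t. t"] by simp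
    show "family_factorizes G B
        (\<lambda>x. \<Prod>K\<in>{K\<in>comps H. K \<subseteq> B}. marg p (K \<union> parents H K) x * (1 / marg p (parents H K) x))"
      using K_fac by (intro factorizes_over_prod) simp
  qed
  moreover have "marg p (B \<union> parents G B) = (\<lambda>x. marg p (parents G B) x *
      (\<Prod>K\<in>{K\<in>comps H. K \<subseteq> B}. marg p (K \<union> parents H K) x * (1 / marg p (parents H K) x)))"
    using family_marg[OF B] by (simp add: fun_eq_iff cond_density_def)
  ultimately show ?thesis by (simp only:)
qed

end

text \<open>Densities of a chain graph model are positive with integrable sections: a regular Gaussian
  density is so up to sign, and the sign is positive because family marginals factorize into
  non-negative potentials.\<close>
lemma gauss_CG_model_pos_density:
  assumes p: "p \<in> gauss_CG_model K" and nodes: "nodes K = UNIV"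
  shows "pos_density p"
proof -
  obtain B where B: "B \<in> comps K"
    using comps_eq_range_ccomp[OF nodes] by blast
  have "\<not> pos_density (\<lambda>x. - p x)"
  proof
    assume "pos_density (\<lambda>x. - p x)"
    then have "0 < - marg p (B \<union> parents K B) x" for x
      using marg_pos marg_uminus by metis
    moreover have "0 \<le> marg p (B \<union> parents K B) x" for x
      using p B factorizes_over_nonneg unfolding gauss_CG_model_def by blast
    ultimately show False by (meson neg_0_less_iff_less not_less)
  qed
  then show ?thesis
    using p regular_gaussian_pos_density unfolding gauss_CG_model_def by blast
qed

theorem lemma3:
  fixes G H :: "'n::finite mgraph"
  assumes "chain_graph G" and "chain_graph H"
    and "nodes G = UNIV" and "nodes H = UNIV"
    and "und H \<subseteq> und G" and "dir H \<subseteq> dir G"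
  shows "gauss_CG_model H \<subseteq> gauss_CG_model G"
proof
  fix p assume p: "p \<in> gauss_CG_model H"
  have gauss: "regular_gaussian p"
    and factor_H: "\<And>x. p x = (\<Prod>K\<in>comps H. cond_density p K (parents H K) x)"
    and fac_H: "\<And>K. K \<in> comps H \<Longrightarrow> family_factorizes H K (marg p (K \<union> parents H K))"
    using p unfolding gauss_CG_model_def by blast+
  interpret nested_density G H p
    using assms gauss_CG_model_pos_density[OF p assms(4)] factor_H by unfold_locales
  show "p \<in> gauss_CG_model G"
    unfolding gauss_CG_model_def using gauss factor_G factorizes_G[OF _ fac_H] by blast
qed

end
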